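(* Let $X$ be a real normed space, $f:X\to\mathbb R\cup\{+\infty\}$ proper, $\bar x\in(\partial f)^{-1}(0)$, and $p,q\in(1,\infty)$ with $p^{-1}+q^{-1}=1$. Suppose the image $\mathrm{Im}\,\partial f=\bigcup_{x\in X}\partial f(x)$ is dense in $X^*$. Then the following are equivalent: (i) there exists $\gamma>0$ with $f(x)\ge f(\bar x)+\gamma\|x-\bar x\|^p$ for all $x\in X$; (ii) there exists $\kappa>0$ such that $\partial f$ is strongly $\frac qp$-subregular at $\bar x$ with parameters $\alpha=+\infty$ and $\kappa$, i.e. $\|x-\bar x\|\le\kappa\,d(0,\partial f(x))^{q/p}$ for all $x\in X$.
   Context: $\partial f(x):=\{\xi\in X^*: x\text{ is a global minimizer of } f-\langle\xi,\cdot\rangle\}$; $d(0,\partial f(x))=\inf\{\|\xi\|:\xi\in\partial f(x)\}$, equal to $+\infty$ if $\partial f(x)=\emptyset$. *)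

theory Defs
  imports "HOL-Analysis.Analysis"
begin

(* Extended-real-valued functions f : X -> R \<union> {+inf}; the dual space X* is
  the space of bounded linear functionals 'a \<Rightarrow>_L real with the operator norm. *)

definition proper_fun :: "('a \<Rightarrow> ereal) \<Rightarrow> bool" where
  "proper_fun f \<longleftrightarrow> (\<forall>x. f x \<noteq> -\<infinity>) \<and> (\<exists>x. f x \<noteq> \<infinity>)"

definition subdiff :: "('a::real_normed_vector \<Rightarrow> ereal) \<Rightarrow> 'a \<Rightarrow> ('a \<Rightarrow>\<^sub>L real) set" where
  "subdiff f x = {\<xi>. \<forall>y. f x - ereal (blinfun_apply \<xi> x) \<le> f y - ereal (blinfun_apply \<xi> y)}"

(* d(0, subdiff f x) = inf of norms, +inf if the set is empty (Inf {} = \<infinity> in ereal). *)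
definition dist0_subdiff :: "('a::real_normed_vector \<Rightarrow> ereal) \<Rightarrow> 'a \<Rightarrow> ereal" where
  "dist0_subdiff f x = Inf ((\<lambda>\<xi>. ereal (norm \<xi>)) ` subdiff f x)"

definition epowr :: "ereal \<Rightarrow> real \<Rightarrow> ereal" where
  "epowr d r = (if d = \<infinity> then \<infinity> else ereal (real_of_ereal d powr r))"

end

theory Submission
  imports Defs
begin

text \<open>
  If \<open>f\<close> grows like \<open>\<gamma> \<parallel>x - x\<^sub>0\<parallel>\<^sup>p\<close> around its minimizer, every subgradient at \<open>x\<close> has norm at
  least \<open>\<gamma> \<parallel>x - x\<^sub>0\<parallel>\<^sup>p\<^sup>-\<^sup>1\<close>, which is subregularity since \<open>(p - 1) q/p = 1\<close>.
  Conversely, subregularity bounds the pairing \<open>\<xi>(y - x\<^sub>0)\<close> of a subgradient \<open>\<xi> \<in> \<partial>f(y)\<close> by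
  \<open>\<kappa> \<parallel>\<xi>\<parallel>\<^sup>q\<close>, so the subgradient inequality gives \<open>\<xi>(x - x\<^sub>0) - \<kappa> \<parallel>\<xi>\<parallel>\<^sup>q \<le> f(x) - f(x\<^sub>0)\<close>
  for all \<open>\<xi>\<close> in the image of \<open>\<partial>f\<close>, hence by density and continuity for all \<open>\<xi> \<in> X\<^sup>*\<close>.
  Taking \<open>\<xi>\<close> a suitable multiple of a norming functional of \<open>x - x\<^sub>0\<close> (Hahn--Banach, by
  Zorn's lemma on graphs of norm-dominated partial functionals) evaluates the left-hand side to \<open>\<gamma> \<parallel>x - x\<^sub>0\<parallel>\<^sup>p\<close>.
\<close>

definition norm_dominated_graph :: "('a::real_normed_vector \<times> real) set \<Rightarrow> bool" where
  "norm_dominated_graph G \<longleftrightarrow> (\<forall>x a b. (x,a) \<in> G \<longrightarrow> (x,b) \<in> G \<longrightarrow> a = b)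
     \<and> (\<forall>x a y b. (x,a) \<in> G \<longrightarrow> (y,b) \<in> G \<longrightarrow> (x + y, a + b) \<in> G)
     \<and> (\<forall>x a c. (x,a) \<in> G \<longrightarrow> (c *\<^sub>R x, c * a) \<in> G)
     \<and> (\<forall>x a. (x,a) \<in> G \<longrightarrow> a \<le> norm x)"

lemma norm_dominated_graphD:
  assumes "norm_dominated_graph G"
  shows norm_dominated_graph_unique: "(x,a) \<in> G \<Longrightarrow> (x,b) \<in> G \<Longrightarrow> a = b"
    and norm_dominated_graph_add: "(x,a) \<in> G \<Longrightarrow> (y,b) \<in> G \<Longrightarrow> (x + y, a + b) \<in> G"
    and norm_dominated_graph_scaleR: "(x,a) \<in> G \<Longrightarrow> (c *\<^sub>R x, c * a) \<in> G"
    and norm_dominated_graph_le_norm: "(x,a) \<in> G \<Longrightarrow> a \<le> norm x"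
  using assms unfolding norm_dominated_graph_def by blast+

lemma norm_dominated_graph_line: "norm_dominated_graph {(t *\<^sub>R v, t * norm v) | t. True}"
proof -
  have "a = b" if "t *\<^sub>R v = s *\<^sub>R v" "a = t * norm v" "b = s * norm v" for t s a b
    using that by (cases "v = 0") (auto dest: scaleR_cancel_right[THEN iffD1])
  moreover have "t * norm v \<le> norm (t *\<^sub>R v)" for t
    by (simp add: mult_right_mono)
  ultimately show ?thesis unfolding norm_dominated_graph_def
    by (auto simp: scaleR_left_distrib distrib_right intro: exI[of _ "_ + _"] exI[of _ "_ * _"])
qed

lemma norm_dominated_graph_chain_Union:
  assumes "C \<in> chains {G. norm_dominated_graph G}"
  shows "norm_dominated_graph (\<Union>C)"
proof -
  have dom: "norm_dominated_graph G" if "G \<in> C" for G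
    using assms that unfolding chains_def by blast
  have common: "\<exists>G\<in>C. u \<in> G \<and> w \<in> G" if "u \<in> \<Union>C" "w \<in> \<Union>C" for u w
    using assms that unfolding chains_def chain_subset_def by blast
  show ?thesis unfolding norm_dominated_graph_def
    using common dom norm_dominated_graphD by (smt (verit) UnionE UnionI)
qed

lemma norm_dominated_graph_extension_value:
  assumes G: "norm_dominated_graph G" and "G \<noteq> {}"
  obtains c where "\<And>z b. (z,b) \<in> G \<Longrightarrow> b - norm (z - y) \<le> c"
    and "\<And>x a. (x,a) \<in> G \<Longrightarrow> c \<le> norm (x + y) - a"
proof
  define L where "L = {b - norm (z - y) | z b. (z,b) \<in> G}"
  have sep: "b - norm (z - y) \<le> norm (x + y) - a" if "(x,a) \<in> G" "(z,b) \<in> G" for x a z b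
  proof -
    have "a + b \<le> norm (x + z)"
      using norm_dominated_graphD[OF G] that by blast
    also have "\<dots> \<le> norm (x + y) + norm (z - y)"
      using norm_triangle_ineq[of "x + y" "z - y"] by (simp add: algebra_simps)
    finally show ?thesis by simp
  qed
  have "L \<noteq> {}" "bdd_above L"
    using \<open>G \<noteq> {}\<close> sep unfolding L_def bdd_above_def by fast+
  then show "b - norm (z - y) \<le> Sup L" if "(z,b) \<in> G" for z b
    using that by (auto simp: L_def intro!: cSup_upper)
  show "Sup L \<le> norm (x + y) - a" if "(x,a) \<in> G" for x a
    using \<open>L \<noteq> {}\<close> that sep by (auto simp: L_def intro!: cSup_least)
qed

lemma norm_dominated_graph_extension_dominated:
  assumes G: "norm_dominated_graph G" and "(x,a) \<in> G"
    and below: "\<And>z b. (z,b) \<in> G \<Longrightarrow> b - norm (z - y) \<le> c"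
    and above: "\<And>x a. (x,a) \<in> G \<Longrightarrow> c \<le> norm (x + y) - a"
  shows "a + t * c \<le> norm (x + t *\<^sub>R y)"
proof (cases t "0 :: real" rule: linorder_cases)
  case less
  define s where "s = - t"
  have s: "s > 0" using less s_def by simp
  have "(1/s) * a - norm ((1/s) *\<^sub>R x - y) \<le> c"
    using below norm_dominated_graph_scaleR[OF G \<open>(x,a) \<in> G\<close>] by blast
  then have "a - s * norm ((1/s) *\<^sub>R x - y) \<le> s * c"
    using s by (simp add: field_simps)
  moreover have "s * norm ((1/s) *\<^sub>R x - y) = norm (x + t *\<^sub>R y)"
  proof -
    have "x + t *\<^sub>R y = s *\<^sub>R ((1/s) *\<^sub>R x - y)"
      using s by (simp add: algebra_simps s_def)
    then show ?thesis using s by simp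
  qed
  ultimately show ?thesis by (simp add: s_def)
next
  case equal
  then show ?thesis using norm_dominated_graph_le_norm[OF G \<open>(x,a) \<in> G\<close>] by simp
next
  case greater
  have "c \<le> norm ((1/t) *\<^sub>R x + y) - (1/t) * a"
    using above norm_dominated_graph_scaleR[OF G \<open>(x,a) \<in> G\<close>] by blast
  then have "t * c \<le> t * norm ((1/t) *\<^sub>R x + y) - a"
    using greater by (simp add: field_simps)
  moreover have "t * norm ((1/t) *\<^sub>R x + y) = norm (x + t *\<^sub>R y)"
  proof -
    have "x + t *\<^sub>R y = t *\<^sub>R ((1/t) *\<^sub>R x + y)"
      using greater by (simp add: algebra_simps)
    then show ?thesis using greater by simp
  qed
  ultimately show ?thesis by simp
qed

lemma norm_dominated_graph_extend:
  assumes G: "norm_dominated_graph G" and "G \<noteq> {}" and y: "\<And>b. (y,b) \<notin> G"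
  shows "\<exists>G'. norm_dominated_graph G' \<and> G \<subset> G'"
proof -
  note unique = norm_dominated_graph_unique[OF G] and add = norm_dominated_graph_add[OF G]
    and scale = norm_dominated_graph_scaleR[OF G]
  obtain c where below: "\<And>z b. (z,b) \<in> G \<Longrightarrow> b - norm (z - y) \<le> c"
    and above: "\<And>x a. (x,a) \<in> G \<Longrightarrow> c \<le> norm (x + y) - a"
    using norm_dominated_graph_extension_value[OF G \<open>G \<noteq> {}\<close>] by blast
  define G' where "G' = {(x + t *\<^sub>R y, a + t * c) | x a t. (x,a) \<in> G}"
  have zero: "(0,0) \<in> G"
    using \<open>G \<noteq> {}\<close> scale[of _ _ 0] by fastforce
  have "G \<subseteq> G'"
    unfolding G'_def by (force intro: exI[of _ 0])
  moreover have "(y, c) \<in> G'"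
    unfolding G'_def using zero by (force intro: exI[of _ 1])
  moreover have coeff_unique: "t = s \<and> x = z"
    if "(x,a) \<in> G" "(z,b) \<in> G" "x + t *\<^sub>R y = z + s *\<^sub>R y" for x a z b t s
  proof (rule ccontr)
    assume "\<not> (t = s \<and> x = z)"
    then have "t \<noteq> s" using that(3) by auto
    have "(z - x, b - a) \<in> G"
      using add[OF that(2) scale[OF that(1), of "-1"]] by simp
    moreover have "z - x = (t - s) *\<^sub>R y"
      using that(3) by (simp add: algebra_simps)
    ultimately have "(y, (b - a) / (t - s)) \<in> G"
      using scale[of "z - x" "b - a" "1 / (t - s)"] \<open>t \<noteq> s\<close> by simp
    then show False using y by blast
  qed
  have "norm_dominated_graph G'"
    unfolding norm_dominated_graph_def
  proof (intro conjI allI impI)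
    fix w a' b' assume "(w,a') \<in> G'" "(w,b') \<in> G'"
    then show "a' = b'"
      unfolding G'_def using coeff_unique unique by (smt (verit) Pair_inject mem_Collect_eq)
  next
    fix w a' u b' assume "(w,a') \<in> G'" "(u,b') \<in> G'"
    then obtain x a t z b s where "(x,a) \<in> G" "(z,b) \<in> G"
      and "w + u = (x + z) + (t + s) *\<^sub>R y" "a' + b' = (a + b) + (t + s) * c"
      unfolding G'_def by (auto simp: algebra_simps)
    then show "(w + u, a' + b') \<in> G'" unfolding G'_def using add by blast
  next
    fix w a' r assume "(w,a') \<in> G'"
    then obtain x a t where "(x,a) \<in> G" "w = x + t *\<^sub>R y" "a' = a + t * c"
      unfolding G'_def by blast
    moreover from this have "(r *\<^sub>R w, r * a') = (r *\<^sub>R x + (r * t) *\<^sub>R y, r * a + (r * t) * c)"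
      by (simp add: algebra_simps)
    ultimately show "(r *\<^sub>R w, r * a') \<in> G'" unfolding G'_def using scale by blast
  next
    fix w a' assume "(w,a') \<in> G'"
    then show "a' \<le> norm w"
      unfolding G'_def
      using norm_dominated_graph_extension_dominated[OF G _ below above] by blast
  qed
  ultimately show ?thesis using y by blast
qed

lemma exists_norming_functional:
  fixes v :: "'a::real_normed_vector"
  obtains \<xi> :: "'a \<Rightarrow>\<^sub>L real" where "\<xi> v = norm v" and "norm \<xi> \<le> 1"
proof -
  define \<G> where "\<G> = {G. norm_dominated_graph G \<and> (v, norm v) \<in> G}"
  have "\<exists>U\<in>\<G>. \<forall>G\<in>C. G \<subseteq> U" if C: "C \<in> chains \<G>" for C
  proof (cases "C = {}")
    case True
    have "(v, norm v) \<in> {(t *\<^sub>R v, t * norm v) | t. True}"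
      by (rule CollectI, rule exI[of _ 1]) simp
    then show ?thesis
      unfolding \<G>_def using True norm_dominated_graph_line[of v] by blast
  next
    case False
    have "C \<in> chains {G. norm_dominated_graph G}"
      using C unfolding \<G>_def chains_def by blast
    then have "norm_dominated_graph (\<Union>C)"
      by (rule norm_dominated_graph_chain_Union)
    moreover have "(v, norm v) \<in> \<Union>C"
      using C False unfolding \<G>_def chains_def by blast
    ultimately show ?thesis
      unfolding \<G>_def by blast
  qed
  then have "\<forall>C\<in>chains \<G>. \<exists>U\<in>\<G>. \<forall>G\<in>C. G \<subseteq> U"
    by blast
  from Zorn_Lemma2[OF this] obtain M where "M \<in> \<G>" and maximal: "\<forall>G\<in>\<G>. M \<subseteq> G \<longrightarrow> G = M"
    by blast
  then have M: "norm_dominated_graph M" and "(v, norm v) \<in> M"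
    unfolding \<G>_def by auto
  have total: "\<exists>a. (x,a) \<in> M" for x
  proof (rule ccontr)
    assume "\<nexists>a. (x,a) \<in> M"
    moreover have "M \<noteq> {}"
      using \<open>(v, norm v) \<in> M\<close> by blast
    ultimately obtain G where "norm_dominated_graph G" "M \<subset> G"
      using norm_dominated_graph_extend[OF M] by blast
    moreover from this have "G \<in> \<G>"
      using \<open>(v, norm v) \<in> M\<close> unfolding \<G>_def by blast
    ultimately show False
      using maximal by blast
  qed
  define g where "g x = (THE a. (x,a) \<in> M)" for x
  have g_eq: "g x = a" if "(x,a) \<in> M" for x a
    unfolding g_def
    using that norm_dominated_graph_unique[OF M] by (intro the_equality) blast+
  have g_graph: "(x, g x) \<in> M" for x
  proof -
    obtain a where "(x,a) \<in> M" using total by blast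
    with g_eq show ?thesis by simp
  qed
  have g_bound: "norm (g x) \<le> norm x * 1" for x
    using norm_dominated_graph_le_norm[OF M g_graph[of x]]
      norm_dominated_graph_le_norm[OF M norm_dominated_graph_scaleR[OF M g_graph[of x], of "-1"]]
    by simp
  have "bounded_linear g"
  proof (rule bounded_linear_intro[OF _ _ g_bound])
    show "g (x + y) = g x + g y" for x y
      by (rule g_eq, rule norm_dominated_graph_add[OF M g_graph g_graph])
    show "g (r *\<^sub>R x) = r *\<^sub>R g x" for r x
      using g_eq[OF norm_dominated_graph_scaleR[OF M g_graph]] by simp
  qed
  show ?thesis
  proof
    show "Blinfun g v = norm v"
      using \<open>bounded_linear g\<close> g_eq[OF \<open>(v, norm v) \<in> M\<close>] by (simp add: bounded_linear_Blinfun_apply)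
    show "norm (Blinfun g) \<le> 1"
      using g_bound by (simp add: bounded_linear_Blinfun_apply[OF \<open>bounded_linear g\<close>] norm_blinfun_bound)
  qed
qed


lemma conjugate_exponent_identities:
  fixes p q :: real
  assumes "p > 1" "q > 1" "1/p + 1/q = 1"
  shows "(p - 1) * (q / p) = 1" "1 + q / p = q" "(p - 1) * (q - 1) = 1"
proof -
  have pq: "p + q = p * q" using assms by (simp add: field_simps)
  show "(p - 1) * (q / p) = 1" "1 + q / p = q" using pq assms by (simp_all add: field_simps)
  show "(p - 1) * (q - 1) = 1" using pq by (simp add: algebra_simps)
qed

lemma blinfun_apply_le_norm: "blinfun_apply \<xi> v \<le> norm \<xi> * norm v"
  using norm_blinfun[of \<xi> v] by simp

lemma subdiffD: "\<xi> \<in> subdiff f x \<Longrightarrow> f x - ereal (\<xi> x) \<le> f y - ereal (\<xi> y)"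
  unfolding subdiff_def by blast

lemma zero_in_subdiff_iff: "0 \<in> subdiff f x \<longleftrightarrow> (\<forall>y. f x \<le> f y)"
  unfolding subdiff_def by simp

lemma subdiff_finite_value:
  assumes "\<xi> \<in> subdiff f x" "f y < \<infinity>"
  shows "f x < \<infinity>"
proof (rule ccontr)
  assume "\<not> f x < \<infinity>"
  then have "f y - ereal (\<xi> y) = \<infinity>"
    using subdiffD[OF assms(1), of y] by simp
  with assms(2) show False by (cases "f y") auto
qed

lemma dist0_subdiff_nonneg: "0 \<le> dist0_subdiff f x"
  unfolding dist0_subdiff_def by (rule Inf_greatest) auto

lemma dist0_subdiff_le_norm: "\<xi> \<in> subdiff f x \<Longrightarrow> dist0_subdiff f x \<le> ereal (norm \<xi>)"
  unfolding dist0_subdiff_def by (rule Inf_lower) auto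

lemma dist0_subdiff_empty: "subdiff f x = {} \<Longrightarrow> dist0_subdiff f x = \<infinity>"
  unfolding dist0_subdiff_def by (simp add: top_ereal_def)

lemma growth_imp_subdiff_norm_ge:
  assumes "p > 1" and m: "f xbar = ereal m"
    and growth: "\<And>x. f xbar + ereal (\<gamma> * norm (x - xbar) powr p) \<le> f x"
    and \<xi>: "\<xi> \<in> subdiff f x"
  shows "\<gamma> * norm (x - xbar) powr (p - 1) \<le> norm \<xi>"
proof -
  define r where "r = norm (x - xbar)"
  have "f x < \<infinity>"
    using subdiff_finite_value[OF \<xi>, of xbar] m by simp
  moreover have "f x > -\<infinity>"
    using growth[of x] m by auto
  ultimately obtain a where a: "f x = ereal a" by (cases "f x") auto
  have "\<gamma> * r powr p \<le> a - m"
    using growth[of x] a m unfolding r_def by simp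
  also have "\<dots> \<le> \<xi> x - \<xi> xbar"
    using subdiffD[OF \<xi>, of xbar] a m by simp
  also have "\<dots> \<le> norm \<xi> * r"
    unfolding r_def using blinfun_apply_le_norm[of \<xi> "x - xbar"] by (simp add: blinfun.diff_right)
  finally have "(\<gamma> * r powr (p - 1)) * r \<le> norm \<xi> * r"
    using powr_add[of r "p - 1" 1] by (cases "r = 0") (simp_all add: r_def mult.assoc)
  then show ?thesis
    by (cases "r = 0") (use \<open>p > 1\<close> r_def in auto)
qed

lemma growth_imp_subregular:
  assumes "p > 1" "q > 1" "1/p + 1/q = 1" "\<gamma> > 0" and m: "f xbar = ereal m"
    and growth: "\<And>x. f xbar + ereal (\<gamma> * norm (x - xbar) powr p) \<le> f x"
  shows "ereal (norm (x - xbar)) \<le> ereal ((1/\<gamma>) powr (q/p)) * epowr (dist0_subdiff f x) (q/p)"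
proof (cases "subdiff f x = {}")
  case True
  then show ?thesis
    using \<open>\<gamma> > 0\<close> by (simp add: dist0_subdiff_empty epowr_def)
next
  case False
  define r where "r = norm (x - xbar)"
  obtain \<xi>0 where "\<xi>0 \<in> subdiff f x" using False by blast
  have lower: "ereal (\<gamma> * r powr (p - 1)) \<le> dist0_subdiff f x"
    unfolding dist0_subdiff_def r_def
    by (rule Inf_greatest) (auto intro: growth_imp_subdiff_norm_ge[OF \<open>p > 1\<close> m growth])
  then obtain d where d: "dist0_subdiff f x = ereal d" and "\<gamma> * r powr (p - 1) \<le> d"
    using dist0_subdiff_le_norm[OF \<open>\<xi>0 \<in> subdiff f x\<close>] by (cases "dist0_subdiff f x") auto
  have "r = (r powr (p - 1)) powr (q/p)"
    using conjugate_exponent_identities[OF assms(1-3)] by (simp add: r_def powr_powr)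
  also have "\<dots> \<le> (d / \<gamma>) powr (q/p)"
    using \<open>\<gamma> * r powr (p - 1) \<le> d\<close> \<open>\<gamma> > 0\<close> assms(1,2)
    by (intro powr_mono2) (auto simp: field_simps)
  also have "\<dots> = (1/\<gamma>) powr (q/p) * d powr (q/p)"
    using \<open>\<gamma> * r powr (p - 1) \<le> d\<close> \<open>\<gamma> > 0\<close>
    by (subst powr_mult[symmetric]) (auto simp: field_simps intro: order_trans[rotated])
  finally show ?thesis
    using d unfolding r_def epowr_def by simp
qed

lemma subregular_imp_pairing_le:
  assumes "p > 1" "q > 1" "1/p + 1/q = 1" "\<kappa> > 0"
    and subreg: "\<And>x. ereal (norm (x - xbar)) \<le> ereal \<kappa> * epowr (dist0_subdiff f x) (q/p)"
    and \<xi>: "\<xi> \<in> subdiff f y"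
  shows "\<xi> (y - xbar) \<le> \<kappa> * norm \<xi> powr q"
proof -
  obtain d where d: "dist0_subdiff f y = ereal d" "0 \<le> d" "d \<le> norm \<xi>"
    using dist0_subdiff_le_norm[OF \<xi>] dist0_subdiff_nonneg[of f y]
    by (cases "dist0_subdiff f y") auto
  have "norm (y - xbar) \<le> \<kappa> * d powr (q/p)"
    using subreg[of y] d by (simp add: epowr_def)
  also have "\<dots> \<le> \<kappa> * norm \<xi> powr (q/p)"
    using d \<open>\<kappa> > 0\<close> assms(1,2) by (intro mult_left_mono powr_mono2) auto
  finally have "\<xi> (y - xbar) \<le> norm \<xi> * (\<kappa> * norm \<xi> powr (q/p))"
    using blinfun_apply_le_norm[of \<xi> "y - xbar"] by (meson mult_left_mono norm_ge_zero order_trans)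
  also have "\<dots> = \<kappa> * norm \<xi> powr (1 + q/p)"
    by (cases "\<xi> = 0") (simp_all add: powr_add)
  finally show ?thesis
    using conjugate_exponent_identities[OF assms(1-3)] by simp
qed

lemma subregular_imp_dual_bound:
  fixes f :: "'a::real_normed_vector \<Rightarrow> ereal" and \<xi> :: "'a \<Rightarrow>\<^sub>L real"
  assumes "p > 1" "q > 1" "1/p + 1/q = 1" "\<kappa> > 0"
    and subreg: "\<And>x. ereal (norm (x - xbar)) \<le> ereal \<kappa> * epowr (dist0_subdiff f x) (q/p)"
    and not_minf: "\<And>y. f y \<noteq> -\<infinity>" and m: "f xbar = ereal m" and min: "\<And>y. f xbar \<le> f y"
    and dense: "closure (\<Union>y. subdiff f y) = UNIV"
    and a: "f x = ereal a"
  shows "\<xi> (x - xbar) - \<kappa> * norm \<xi> powr q \<le> a - m"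
proof -
  define C where "C = {\<xi> :: 'a \<Rightarrow>\<^sub>L real. blinfun_apply \<xi> (x - xbar) - \<kappa> * norm \<xi> powr q \<le> a - m}"
  have "\<xi> \<in> C" if "\<xi> \<in> subdiff f y" for \<xi> y
  proof -
    have "f y < \<infinity>"
      using subdiff_finite_value[OF that, of x] a by simp
    then obtain b where b: "f y = ereal b"
      using not_minf[of y] by (cases "f y") auto
    have "\<xi> (x - y) \<le> a - b"
      using subdiffD[OF that, of x] a b by (simp add: blinfun.diff_right)
    moreover have "m \<le> b"
      using min[of y] m b by simp
    moreover have "\<xi> (x - xbar) = \<xi> (x - y) + \<xi> (y - xbar)"
      by (simp add: blinfun.diff_right)
    ultimately show ?thesis
      unfolding C_def using subregular_imp_pairing_le[OF assms(1-4) subreg that] by simp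
  qed
  moreover have "closed C"
    unfolding C_def using \<open>q > 1\<close>
    by (intro closed_Collect_le continuous_intros continuous_on_powr') auto
  ultimately have "closure (\<Union>y. subdiff f y) \<subseteq> C"
    by (intro closure_minimal) blast+
  then show ?thesis
    using dense unfolding C_def by blast
qed

lemma dual_bound_imp_growth:
  fixes v :: "'a::real_normed_vector"
  assumes "p > 1" "q > 1" "1/p + 1/q = 1" "\<kappa> > 0"
    and bound: "\<And>\<xi> :: 'a \<Rightarrow>\<^sub>L real. blinfun_apply \<xi> v - \<kappa> * norm \<xi> powr q \<le> c"
  shows "(1 / (2 * \<kappa>)) powr (p - 1) / 2 * norm v powr p \<le> c"
proof -
  note ids = conjugate_exponent_identities[OF assms(1-3)]
  define r where "r = norm v"
  define s where "s = r / (2 * \<kappa>)"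
  define t where "t = s powr (p - 1)"
  obtain \<xi>0 :: "'a \<Rightarrow>\<^sub>L real" where \<xi>0: "\<xi>0 v = r" "norm \<xi>0 \<le> 1"
    using exists_norming_functional unfolding r_def by blast
  have "s \<ge> 0" "t \<ge> 0"
    using \<open>\<kappa> > 0\<close> unfolding s_def t_def r_def by auto
  have t_powr_q: "t powr q = t * s"
  proof (cases "s = 0")
    case False
    then have "t powr (q - 1) = s"
      using \<open>s \<ge> 0\<close> ids(3) by (simp add: t_def powr_powr)
    then show ?thesis
      using powr_add[of t 1 "q - 1"] \<open>t \<ge> 0\<close> by (cases "t = 0") auto
  qed (simp add: t_def)
  have "norm (t *\<^sub>R \<xi>0) powr q \<le> t powr q"
    using \<xi>0 \<open>t \<ge> 0\<close> \<open>q > 1\<close> by (intro powr_mono2) (auto intro: mult_left_le)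
  then have "t * r - \<kappa> * (t * s) \<le> c"
    using bound[of "t *\<^sub>R \<xi>0"] \<xi>0 t_powr_q \<open>\<kappa> > 0\<close>
    by (smt (verit) mult_left_mono scaleR_blinfun.rep_eq real_scaleR_def)
  moreover have "t * r - \<kappa> * (t * s) = t * r / 2"
    using \<open>\<kappa> > 0\<close> by (simp add: s_def field_simps)
  moreover have "t * r / 2 = (1 / (2 * \<kappa>)) powr (p - 1) / 2 * r powr p"
    using powr_add[of r "p - 1" 1] \<open>\<kappa> > 0\<close>
    by (cases "r = 0") (auto simp: t_def s_def r_def powr_mult[symmetric] field_simps)
  ultimately show ?thesis
    unfolding r_def by simp
qed

lemma subregular_imp_growth:
  fixes f :: "'a::real_normed_vector \<Rightarrow> ereal"
  assumes "p > 1" "q > 1" "1/p + 1/q = 1" "\<kappa> > 0"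
    and subreg: "\<And>x. ereal (norm (x - xbar)) \<le> ereal \<kappa> * epowr (dist0_subdiff f x) (q/p)"
    and not_minf: "\<And>y. f y \<noteq> -\<infinity>" and m: "f xbar = ereal m" and min: "\<And>y. f xbar \<le> f y"
    and dense: "closure (\<Union>y. subdiff f y) = UNIV"
  shows "f xbar + ereal ((1 / (2 * \<kappa>)) powr (p - 1) / 2 * norm (x - xbar) powr p) \<le> f x"
proof (cases "f x")
  case (real a)
  then show ?thesis
    using dual_bound_imp_growth[OF assms(1-4) subregular_imp_dual_bound[OF assms(1-9) real]] m
    by simp
qed (use not_minf in auto)

theorem corollary4p3:
  fixes f :: "'a::real_normed_vector \<Rightarrow> ereal" and xbar :: 'a and p q :: real
  assumes "proper_fun f"
    and "0 \<in> subdiff f xbar"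
    and "p > 1" and "q > 1" and "1 / p + 1 / q = 1"
    and "closure (\<Union>x. subdiff f x) = UNIV"
  shows "(\<exists>\<gamma>>0. \<forall>x. f x \<ge> f xbar + ereal (\<gamma> * norm (x - xbar) powr p))
     \<longleftrightarrow> (\<exists>\<kappa>>0. \<forall>x. ereal (norm (x - xbar)) \<le> ereal \<kappa> * epowr (dist0_subdiff f x) (q / p))"
proof -
  have min: "\<And>y. f xbar \<le> f y"
    using assms(2) zero_in_subdiff_iff by blast
  have not_minf: "\<And>y. f y \<noteq> -\<infinity>" and "\<exists>y. f y \<noteq> \<infinity>"
    using assms(1) unfolding proper_fun_def by blast+
  then obtain m where m: "f xbar = ereal m"
    using min by (cases "f xbar") (auto simp: top_ereal_def[symmetric] top_unique)
  show ?thesis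
  proof
    assume "\<exists>\<gamma>>0. \<forall>x. f x \<ge> f xbar + ereal (\<gamma> * norm (x - xbar) powr p)"
    then obtain \<gamma> where \<gamma>: "\<gamma> > 0"
      and growth: "\<And>x. f xbar + ereal (\<gamma> * norm (x - xbar) powr p) \<le> f x"
      by blast
    show "\<exists>\<kappa>>0. \<forall>x. ereal (norm (x - xbar)) \<le> ereal \<kappa> * epowr (dist0_subdiff f x) (q / p)"
      using growth_imp_subregular[OF assms(3-5) \<gamma> m growth] \<gamma>
      by (intro exI[of _ "(1/\<gamma>) powr (q/p)"]) auto
  next
    assume "\<exists>\<kappa>>0. \<forall>x. ereal (norm (x - xbar)) \<le> ereal \<kappa> * epowr (dist0_subdiff f x) (q / p)"
    then obtain \<kappa> where \<kappa>: "\<kappa> > 0"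
      and subreg: "\<And>x. ereal (norm (x - xbar)) \<le> ereal \<kappa> * epowr (dist0_subdiff f x) (q / p)"
      by blast
    show "\<exists>\<gamma>>0. \<forall>x. f x \<ge> f xbar + ereal (\<gamma> * norm (x - xbar) powr p)"
      using subregular_imp_growth[OF assms(3-5) \<kappa> subreg not_minf m min assms(6)] \<kappa>
      by (intro exI[of _ "(1 / (2 * \<kappa>)) powr (p - 1) / 2"]) auto
  qed
qed

end
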